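(* Let $X,Y$ be Banach spaces over $\mathbb{K}\in\{\mathbb{R},\mathbb{C}\}$ and let $G\in L(X,Y)$ with $\|G\|=1$. Then for every $T\in L(X,Y)$, \[ \|T\|_G=\max\{|\lambda|:\lambda\in S_G(T)\}=\max\{\lambda:\lambda\in \widetilde{S}_G(T)\}, \] where \[ S_G(T):=\bigcap_{\delta>0}\overline{\{y^*(Tx): x\in S_X,\ y^*\in S_{Y^*},\ \|Gx\|>1-\delta\}},\qquad \widetilde{S}_G(T):=\bigcap_{\delta>0}\overline{\{\|Tx\|: x\in S_X,\ \|Gx\|>1-\delta\}}. \]
   Context: $S_X$ denotes the unit sphere of $X$, $Y^*$ the dual of $Y$, and $L(X,Y)$ the space of bounded linear operators with the operator norm. For $G\in L(X,Y)$ with $\|G\|=1$ and $T\in L(X,Y)$, the $G$-(semi)norm is $\|T\|_G := \inf_{\delta>0}\sup\{\|Tx\|: x\in S_X,\ \|Gx\|>1-\delta\}$. *)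

theory Defs
  imports "HOL-Analysis.Analysis"
begin

text \<open>Complex Banach spaces: a real Banach space together with a compatible
  complex scalar multiplication (the library only has real normed spaces).\<close>
class complex_banach = banach +
  fixes cscale :: "complex \<Rightarrow> 'a \<Rightarrow> 'a"  (infixr "*\<^sub>C" 75)
  assumes cscale_add_right: "c *\<^sub>C (x + y) = c *\<^sub>C x + c *\<^sub>C y"
    and cscale_add_left: "(a + b) *\<^sub>C x = a *\<^sub>C x + b *\<^sub>C x"
    and cscale_cscale: "a *\<^sub>C (b *\<^sub>C x) = (a * b) *\<^sub>C x"
    and cscale_one: "1 *\<^sub>C x = x"
    and cscale_of_real: "complex_of_real r *\<^sub>C x = r *\<^sub>R x"
    and norm_cscale: "norm (c *\<^sub>C x) = cmod c * norm x"

definition clinear_op :: "('a::complex_banach \<Rightarrow> 'b::complex_banach) \<Rightarrow> bool" where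
  "clinear_op T \<longleftrightarrow> (\<forall>c x. T (c *\<^sub>C x) = c *\<^sub>C T x)"

definition cdual :: "('b::complex_banach \<Rightarrow> complex) \<Rightarrow> bool" where
  "cdual f \<longleftrightarrow> bounded_linear f \<and> (\<forall>c y. f (c *\<^sub>C y) = c * f y)"

definition gnorm :: "('a::real_normed_vector \<Rightarrow> 'b::real_normed_vector) \<Rightarrow> ('a \<Rightarrow> 'b) \<Rightarrow> real" where
  "gnorm G T = (INF \<delta>\<in>{0<..}. SUP x\<in>{x \<in> sphere 0 1. norm (G x) > 1 - \<delta>}. norm (T x))"

definition SG_real :: "('a::real_normed_vector \<Rightarrow> 'b::real_normed_vector) \<Rightarrow> ('a \<Rightarrow> 'b) \<Rightarrow> real set" where
  "SG_real G T = (\<Inter>\<delta>\<in>{0<..}. closure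
     {blinfun_apply f (T x) | x f. x \<in> sphere 0 1 \<and> (f :: 'b \<Rightarrow>\<^sub>L real) \<in> sphere 0 1
        \<and> norm (G x) > 1 - \<delta>})"

definition SG_complex :: "('a::complex_banach \<Rightarrow> 'b::complex_banach) \<Rightarrow> ('a \<Rightarrow> 'b) \<Rightarrow> complex set" where
  "SG_complex G T = (\<Inter>\<delta>\<in>{0<..}. closure
     {f (T x) | x f. x \<in> sphere 0 1 \<and> cdual f \<and> onorm f = 1 \<and> norm (G x) > 1 - \<delta>})"

definition SG_tilde :: "('a::real_normed_vector \<Rightarrow> 'b::real_normed_vector) \<Rightarrow> ('a \<Rightarrow> 'b) \<Rightarrow> real set" where
  "SG_tilde G T = (\<Inter>\<delta>\<in>{0<..}. closure
     {norm (T x) | x. x \<in> sphere 0 1 \<and> norm (G x) > 1 - \<delta>})"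

definition is_max :: "real set \<Rightarrow> real \<Rightarrow> bool" where
  "is_max A m \<longleftrightarrow> m \<in> A \<and> (\<forall>a\<in>A. a \<le> m)"

end

theory Submission
  imports Defs
begin

(* For \<delta> > 0 let A(\<delta>) be the set of unit vectors x with \<parallel>G x\<parallel> > 1 - \<delta>. It is nonempty because
   \<parallel>G\<parallel> = 1, it shrinks with \<delta>, and \<parallel>T\<parallel>_G is the infimum over \<delta> of the supremum of \<parallel>T x\<parallel> over
   A(\<delta>). Hence for every \<delta> some x \<in> A(\<delta>) has \<parallel>T x\<parallel> close to \<parallel>T\<parallel>_G, while for small \<delta> all
   x \<in> A(\<delta>) have \<parallel>T x\<parallel> \<le> \<parallel>T\<parallel>_G + \<epsilon>. The sets defining S_G(T) and its tilde version consist of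
   numbers bounded in modulus by some \<parallel>T x\<parallel> with x \<in> A(\<delta>), and they contain each such \<parallel>T x\<parallel>:
   take for y* a norm-one functional norming T x, given by Hahn-Banach (over \<complex> by complexifying
   a real one). So \<parallel>T\<parallel>_G lies in every closure, and nothing in their intersection exceeds it in
   modulus. *)

(* Graphs of norm-dominated linear functionals with value \<parallel>y\<parallel> at y, encoded as subspaces of
   V \<times> \<real> so that Zorn's lemma can be applied to set inclusion. *)
definition dominated_graphs :: "'a::real_normed_vector \<Rightarrow> ('a \<times> real) set set" where
  "dominated_graphs y =
     {H. subspace H \<and> (\<forall>t. (t *\<^sub>R y, t * norm y) \<in> H) \<and> (\<forall>(v, a)\<in>H. a \<le> norm v)}"

lemma dominated_graphsD:
  assumes "H \<in> dominated_graphs y"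
  shows "subspace H" and "(t *\<^sub>R y, t * norm y) \<in> H" and "(v, a) \<in> H \<Longrightarrow> a \<le> norm v"
  using assms by (auto simp: dominated_graphs_def)

lemma dominated_graph_single_valued:
  assumes H: "H \<in> dominated_graphs y" and "(v, a) \<in> H" "(v, b) \<in> H"
  shows "a = b"
proof -
  have "(v, a) - (v, b) \<in> H" "(v, b) - (v, a) \<in> H"
    using subspace_diff[OF dominated_graphsD(1)[OF H]] assms(2,3) by blast+
  then have "a - b \<le> norm (0::'a)" "b - a \<le> norm (0::'a)"
    using dominated_graphsD(3)[OF H] by fastforce+
  then show ?thesis by simp
qed

lemma dominated_graphs_chain_Union:
  assumes "C \<noteq> {}" "subset.chain (dominated_graphs y) C"
  shows "\<Union>C \<in> dominated_graphs y"
proof -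
  have C: "C \<subseteq> dominated_graphs y" and chain: "\<And>X Y. X \<in> C \<Longrightarrow> Y \<in> C \<Longrightarrow> X \<subseteq> Y \<or> Y \<subseteq> X"
    using assms(2) by (auto simp: subset.chain_def)
  have "subspace (\<Union>C)"
  proof (rule subspaceI)
    show "0 \<in> \<Union>C"
      using assms(1) C subspace_0 dominated_graphsD(1) by blast
    show "p + q \<in> \<Union>C" if pq: "p \<in> \<Union>C" "q \<in> \<Union>C" for p q
    proof -
      obtain X Y where "X \<in> C" "Y \<in> C" "p \<in> X" "q \<in> Y" using pq by blast
      then show ?thesis
        using chain[of X Y] C subspace_add dominated_graphsD(1) by blast
    qed
    show "c *\<^sub>R p \<in> \<Union>C" if "p \<in> \<Union>C" for c p
      using that C subspace_scale dominated_graphsD(1) by blast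
  qed
  then show ?thesis
    using assms(1) C unfolding dominated_graphs_def by blast
qed

lemma dominated_graph_extension_value:
  assumes H: "H \<in> dominated_graphs y"
  shows "\<exists>c. \<forall>(u, a)\<in>H. a + c \<le> norm (u + z) \<and> a - c \<le> norm (u - z)"
proof -
  note S = dominated_graphsD(1)[OF H] and D = dominated_graphsD(3)[OF H]
  have sep: "a - norm (u - z) \<le> norm (w + z) - b" if "(u, a) \<in> H" "(w, b) \<in> H" for u a w b
  proof -
    have "a + b \<le> norm (u + w)"
      using D subspace_add[OF S that] by simp
    also have "\<dots> \<le> norm (u - z) + norm (w + z)"
      using norm_triangle_ineq[of "u - z" "w + z"] by simp
    finally show ?thesis by simp
  qed
  define L where "L = {a - norm (u - z) | u a. (u, a) \<in> H}"
  have H0: "(0, 0) \<in> H"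
    using subspace_0[OF S] by (simp add: zero_prod_def)
  have "L \<noteq> {}" "bdd_above L"
    using H0 sep[OF _ H0] unfolding L_def bdd_above_def by auto
  then have "a - norm (u - z) \<le> Sup L" "Sup L \<le> norm (u + z) - a" if "(u, a) \<in> H" for u a
    using that sep by (auto simp: L_def intro!: cSup_upper cSup_least)
  then show ?thesis
    by (intro exI[of _ "Sup L"]) (fastforce simp: algebra_simps)
qed

lemma dominated_graph_extension_bound:
  assumes H: "H \<in> dominated_graphs y" and c: "\<forall>(u, a)\<in>H. a + c \<le> norm (u + z)"
    and "(v, a) \<in> H" "t \<ge> 0"
  shows "a + t * c \<le> norm (v + t *\<^sub>R z)"
proof (cases "t = 0")
  case True
  then show ?thesis using dominated_graphsD(3)[OF H \<open>(v, a) \<in> H\<close>] by simp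
next
  case False
  then have t: "t > 0" using \<open>t \<ge> 0\<close> by simp
  have "inverse t *\<^sub>R (v, a) \<in> H"
    using subspace_scale[OF dominated_graphsD(1)[OF H] \<open>(v, a) \<in> H\<close>] .
  then have "inverse t * a + c \<le> norm (inverse t *\<^sub>R v + z)"
    using c by auto
  then have "t * (inverse t * a + c) \<le> t * norm (inverse t *\<^sub>R v + z)"
    using t by (simp add: mult_left_mono)
  also have "t * norm (inverse t *\<^sub>R v + z) = norm (v + t *\<^sub>R z)"
    using t by (simp add: scaleR_add_right flip: norm_scaleR[of t, simplified abs_of_pos[OF t]])
  finally show ?thesis using t by (simp add: algebra_simps)
qed

lemma dominated_graph_extend:
  assumes H: "H \<in> dominated_graphs y" and z: "\<forall>a. (z, a) \<notin> H"
  shows "\<exists>H'\<in>dominated_graphs y. H \<subset> H'"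
proof -
  obtain c where c: "\<forall>(u, a)\<in>H. a + c \<le> norm (u + z) \<and> a - c \<le> norm (u - z)"
    using dominated_graph_extension_value[OF H] by blast
  define H' where "H' = span (insert (z, c) H)"
  have span_H: "span H = H"
    using dominated_graphsD(1)[OF H] by simp
  have "a \<le> norm v" if in_H': "(v, a) \<in> H'" for v a
  proof -
    obtain t where va: "(v - t *\<^sub>R z, a - t * c) \<in> H"
      using in_H' unfolding H'_def span_breakdown_eq span_H by auto
    show ?thesis
    proof (cases "t \<le> 0")
      case True
      have "\<forall>(u, a)\<in>H. a + (- c) \<le> norm (u + (- z))" using c by auto
      from dominated_graph_extension_bound[OF H this va, of "- t"] True
      show ?thesis by simp
    next
      case False
      have "\<forall>(u, a)\<in>H. a + c \<le> norm (u + z)" using c by auto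
      from dominated_graph_extension_bound[OF H this va, of t] False
      show ?thesis by simp
    qed
  qed
  then have "H' \<in> dominated_graphs y"
    using H unfolding H'_def dominated_graphs_def by (auto intro: span_base)
  moreover have "H \<subset> H'"
    using z span_superset[of "insert (z, c) H"] unfolding H'_def by blast
  ultimately show ?thesis by blast
qed

lemma hahn_banach_norming_functional:
  fixes y :: "'a::real_normed_vector"
  shows "\<exists>f::'a \<Rightarrow>\<^sub>L real. norm f \<le> 1 \<and> blinfun_apply f y = norm y"
proof -
  have "span {(y, norm y)} \<in> dominated_graphs y"
    using subspace_span[of "{(y, norm y)}"]
    by (auto simp: dominated_graphs_def span_singleton abs_mult intro: mult_right_mono)
  then obtain M where M: "M \<in> dominated_graphs y"
    and maximal: "\<And>X. X \<in> dominated_graphs y \<Longrightarrow> M \<subseteq> X \<Longrightarrow> X = M"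
    using subset_Zorn_nonempty[of "dominated_graphs y"] dominated_graphs_chain_Union by blast
  have "\<exists>a. (v, a) \<in> M" for v
    using dominated_graph_extend[OF M] maximal by blast
  then obtain f where f: "\<And>v. (v, f v) \<in> M" by metis
  note S = dominated_graphsD(1)[OF M] and single = dominated_graph_single_valued[OF M f]
  have "linear f"
  proof
    show "f (u + v) = f u + f v" for u v
      using single subspace_add[OF S f f] by simp
    show "f (r *\<^sub>R v) = r *\<^sub>R f v" for r v
      using single subspace_scale[OF S f] by simp
  qed
  have bound: "\<bar>f v\<bar> \<le> norm v" for v
    using dominated_graphsD(3)[OF M f] dominated_graphsD(3)[OF M f[of "- v"]]
      linear_neg[OF \<open>linear f\<close>, of v] by (simp add: abs_le_iff)
  then have "bounded_linear f"
    using \<open>linear f\<close> by (auto simp: linear_iff intro!: bounded_linear_intro[where K=1])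
  moreover have "f y = norm y"
    using single dominated_graphsD(2)[OF M, of 1] by simp
  ultimately show ?thesis
    using bound by (intro exI[of _ "Blinfun f"]) (auto simp: bounded_linear_Blinfun_apply intro!: norm_blinfun_bound)
qed

lemma norming_functional_norm_one:
  fixes y :: "'a::real_normed_vector"
  assumes "\<exists>w::'a. w \<noteq> 0"
  shows "\<exists>f::'a \<Rightarrow>\<^sub>L real. norm f = 1 \<and> blinfun_apply f y = norm y"
proof -
  obtain y' :: 'a where y': "y' \<noteq> 0" "y = 0 \<or> y' = y" using assms by metis
  obtain f :: "'a \<Rightarrow>\<^sub>L real" where f: "norm f \<le> 1" "blinfun_apply f y' = norm y'"
    using hahn_banach_norming_functional by blast
  have "norm y' \<le> norm f * norm y'"
    using norm_blinfun[of f y'] f(2) by simp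
  then have "norm f = 1" using f(1) y'(1) by simp
  moreover have "blinfun_apply f y = norm y" using f(2) y'(2) by auto
  ultimately show ?thesis by blast
qed

lemma cscale_decompose:
  fixes v :: "'a::complex_banach"
  shows "c *\<^sub>C v = Re c *\<^sub>R v + Im c *\<^sub>R (\<i> *\<^sub>C v)"
proof -
  have "c = complex_of_real (Re c) + complex_of_real (Im c) * \<i>"
    by (simp add: complex_eq_iff)
  then have "c *\<^sub>C v = (complex_of_real (Re c) + complex_of_real (Im c) * \<i>) *\<^sub>C v"
    by simp
  also have "\<dots> = Re c *\<^sub>R v + Im c *\<^sub>R (\<i> *\<^sub>C v)"
    by (simp add: cscale_add_left cscale_cscale[symmetric] cscale_of_real)
  finally show ?thesis .
qed

definition complexify :: "('a::complex_banach \<Rightarrow> real) \<Rightarrow> 'a \<Rightarrow> complex" where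
  "complexify f v = Complex (f v) (- f (\<i> *\<^sub>C v))"

lemma complexify_cscale:
  fixes f :: "'a::complex_banach \<Rightarrow> real"
  assumes "linear f"
  shows "complexify f (c *\<^sub>C v) = c * complexify f v"
proof -
  have f_cscale: "f (c *\<^sub>C v) = Re c * f v + Im c * f (\<i> *\<^sub>C v)" for c and v :: 'a
    using assms by (subst cscale_decompose) (simp add: linear_add linear_scale)
  have "complexify f (c *\<^sub>C v) = Complex (f (c *\<^sub>C v)) (- f ((\<i> * c) *\<^sub>C v))"
    by (simp add: complexify_def cscale_cscale)
  also have "\<dots> = c * complexify f v"
    using f_cscale[of c v] f_cscale[of "\<i> * c" v] by (simp add: complexify_def complex_eq_iff)
  finally show ?thesis .
qed

lemma norm_complexify_le:
  fixes f :: "'a::complex_banach \<Rightarrow>\<^sub>L real"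
  assumes "norm f \<le> 1"
  shows "cmod (complexify f v) \<le> norm v"
proof (cases "complexify f v = 0")
  case False
  \<comment> \<open>rotate v so that the functional becomes real and positive\<close>
  define c where "c = cnj (complexify f v) / cmod (complexify f v)"
  have "complexify f (c *\<^sub>C v) = c * complexify f v"
    by (simp add: complexify_cscale bounded_linear.linear[OF blinfun.bounded_linear_right])
  also have "\<dots> = cmod (complexify f v)"
    using False by (simp add: c_def complex_norm_square[symmetric] power2_eq_square mult.commute)
  finally have "cmod (complexify f v) = f (c *\<^sub>C v)"
    by (metis Re_complex_of_real complex.sel(1) complexify_def)
  also have "\<dots> \<le> norm f * norm (c *\<^sub>C v)"
    using norm_blinfun[of f "c *\<^sub>C v"] by simp
  also have "\<dots> \<le> norm v"
    using False assms by (simp add: c_def norm_cscale norm_divide mult_left_le_one_le)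
  finally show ?thesis .
qed simp

lemma cdual_complexify:
  fixes f :: "'a::complex_banach \<Rightarrow>\<^sub>L real"
  assumes "norm f \<le> 1"
  shows "cdual (complexify f)" and "onorm (complexify f) \<le> 1"
proof -
  have cscale: "complexify f (c *\<^sub>C v) = c * complexify f v" for c v
    by (simp add: complexify_cscale bounded_linear.linear[OF blinfun.bounded_linear_right])
  have "bounded_linear (complexify f)"
  proof (rule bounded_linear_intro[where K=1])
    show "complexify f (u + v) = complexify f u + complexify f v" for u v
      by (simp add: complexify_def cscale_add_right blinfun.add_right complex_eq_iff)
    show "complexify f (r *\<^sub>R v) = r *\<^sub>R complexify f v" for r v
      using cscale[of "complex_of_real r" v] by (simp add: cscale_of_real scaleR_conv_of_real)
    show "norm (complexify f v) \<le> norm v * 1" for v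
      using norm_complexify_le[OF assms] by simp
  qed
  then show "cdual (complexify f)"
    using cscale by (simp add: cdual_def)
  show "onorm (complexify f) \<le> 1"
    using norm_complexify_le[OF assms] by (intro onorm_bound) simp_all
qed

lemma norming_cdual_onorm_one:
  fixes y :: "'a::complex_banach"
  assumes "\<exists>w::'a. w \<noteq> 0"
  shows "\<exists>F. cdual F \<and> onorm F = 1 \<and> F y = complex_of_real (norm y)"
proof -
  obtain y' :: 'a where y': "y' \<noteq> 0" "y = 0 \<or> y' = y" using assms by metis
  obtain f :: "'a \<Rightarrow>\<^sub>L real" where f: "norm f \<le> 1" "blinfun_apply f y' = norm y'"
    using hahn_banach_norming_functional by blast
  define F where "F = complexify f"
  note F = cdual_complexify[OF f(1), folded F_def]
  have "Re (F y') = norm y'"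
    using f(2) by (simp add: F_def complexify_def)
  moreover have "cmod (F y') \<le> norm y'"
    using norm_complexify_le[OF f(1)] by (simp add: F_def)
  ultimately
  have "(Im (F y'))\<^sup>2 \<le> 0"
    using cmod_power2[of "F y'"] power_mono[of "cmod (F y')" "norm y'" 2] by simp
  then have Fy': "F y' = norm y'"
    using \<open>Re (F y') = norm y'\<close> by (simp add: complex_eq_iff)
  have "norm y' \<le> onorm F * norm y'"
    using onorm[of F y'] F(1) Fy' by (simp add: cdual_def)
  then have "onorm F = 1" using F(2) y'(1) by simp
  moreover have "F 0 = 0"
    using F(1) by (simp add: cdual_def linear_simps)
  then have "F y = norm y" using Fy' y'(2) by auto
  ultimately show ?thesis using F(1) by blast
qed

context
  fixes A :: "real \<Rightarrow> 'x set" and h :: "'x \<Rightarrow> real" and B :: real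
  assumes A_nonempty: "\<And>\<delta>. \<delta> > 0 \<Longrightarrow> A \<delta> \<noteq> {}"
    and A_mono: "\<And>\<delta> \<delta>'. 0 < \<delta> \<Longrightarrow> \<delta> \<le> \<delta>' \<Longrightarrow> A \<delta> \<subseteq> A \<delta>'"
    and h_bounded: "\<And>\<delta> x. x \<in> A \<delta> \<Longrightarrow> \<bar>h x\<bar> \<le> B"
begin

lemma bdd_above_h_image: "bdd_above (h ` A \<delta>)"
  using h_bounded by (auto simp: bdd_above_def abs_le_iff)

lemma bdd_below_SUP_h: "bdd_below ((\<lambda>\<delta>. SUP x\<in>A \<delta>. h x) ` {0<..})"
proof (rule bdd_belowI2)
  fix \<delta> :: real assume "\<delta> \<in> {0<..}"
  then obtain x where "x \<in> A \<delta>" using A_nonempty by fastforce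
  then have "h x \<le> (SUP x\<in>A \<delta>. h x)" "- B \<le> h x"
    using bdd_above_h_image h_bounded[of x \<delta>] by (auto intro: cSUP_upper simp: abs_le_iff)
  then show "- B \<le> (SUP x\<in>A \<delta>. h x)" by linarith
qed

lemma INF_SUP_eventually_less:
  assumes "\<epsilon> > 0"
  shows "\<exists>\<delta>>0. \<forall>x\<in>A \<delta>. h x < (INF \<delta>\<in>{0<..}. SUP x\<in>A \<delta>. h x) + \<epsilon>"
proof -
  have "(INF \<delta>\<in>{0<..}. SUP x\<in>A \<delta>. h x) < (INF \<delta>\<in>{0<..}. SUP x\<in>A \<delta>. h x) + \<epsilon>"
    using assms by simp
  then obtain \<delta> where "\<delta> > 0" "(SUP x\<in>A \<delta>. h x) < (INF \<delta>\<in>{0<..}. SUP x\<in>A \<delta>. h x) + \<epsilon>"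
    by (subst (asm) cINF_less_iff[OF _ bdd_below_SUP_h]) auto
  then show ?thesis
    using bdd_above_h_image by (meson cSUP_upper le_less_trans)
qed

lemma INF_SUP_approx:
  assumes "\<delta> > 0" "\<epsilon> > 0"
  shows "\<exists>x\<in>A \<delta>. \<bar>h x - (INF \<delta>\<in>{0<..}. SUP x\<in>A \<delta>. h x)\<bar> < \<epsilon>"
proof -
  define g where "g = (INF \<delta>\<in>{0<..}. SUP x\<in>A \<delta>. h x)"
  obtain \<delta>' where "\<delta>' > 0" and below: "\<forall>x\<in>A \<delta>'. h x < g + \<epsilon>"
    using INF_SUP_eventually_less[OF assms(2)] unfolding g_def by blast
  define d where "d = min \<delta> \<delta>'"
  have d: "d > 0" "A d \<subseteq> A \<delta>" "A d \<subseteq> A \<delta>'"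
    using assms(1) \<open>\<delta>' > 0\<close> A_mono by (auto simp: d_def)
  have "g \<le> (SUP x\<in>A d. h x)"
    unfolding g_def using d(1) bdd_below_SUP_h by (auto intro: cINF_lower)
  moreover obtain x where "x \<in> A d" "(SUP x\<in>A d. h x) - \<epsilon> < h x"
    using less_cSUP_iff[OF A_nonempty[OF d(1)] bdd_above_h_image, of "(SUP x\<in>A d. h x) - \<epsilon>"] assms(2)
    by auto
  moreover have "x \<in> A \<delta>" "h x < g + \<epsilon>"
    using d below \<open>x \<in> A d\<close> by auto
  ultimately show ?thesis
    unfolding g_def[symmetric] by (intro bexI[of _ x]) (auto simp: abs_less_iff)
qed

lemma INF_SUP_mem_closure:
  fixes W :: "real \<Rightarrow> 'v::real_normed_algebra_1 set"
  assumes "\<And>\<delta> x. \<delta> > 0 \<Longrightarrow> x \<in> A \<delta> \<Longrightarrow> of_real (h x) \<in> W \<delta>"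
  shows "of_real (INF \<delta>\<in>{0<..}. SUP x\<in>A \<delta>. h x) \<in> (\<Inter>\<delta>\<in>{0<..}. closure (W \<delta>))"
proof (clarsimp simp: closure_approachable)
  fix \<delta> e :: real assume "0 < \<delta>" "0 < e"
  then obtain x where "x \<in> A \<delta>" "\<bar>h x - (INF \<delta>\<in>{0<..}. SUP x\<in>A \<delta>. h x)\<bar> < e"
    using INF_SUP_approx by blast
  then show "\<exists>w\<in>W \<delta>. dist w (of_real (INF \<delta>\<in>{0<..}. SUP x\<in>A \<delta>. h x)) < e"
    using assms[OF \<open>0 < \<delta>\<close>] by (intro bexI[of _ "of_real (h x)"]) (auto simp: dist_norm simp flip: of_real_diff)
qed

lemma norm_le_INF_SUP_if_mem_closure:
  fixes W :: "real \<Rightarrow> 'v::real_normed_vector set"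
  assumes W_bound: "\<And>\<delta> w. \<delta> > 0 \<Longrightarrow> w \<in> W \<delta> \<Longrightarrow> \<exists>x\<in>A \<delta>. norm w \<le> h x"
    and a: "a \<in> (\<Inter>\<delta>\<in>{0<..}. closure (W \<delta>))"
  shows "norm a \<le> (INF \<delta>\<in>{0<..}. SUP x\<in>A \<delta>. h x)"
proof (rule field_le_epsilon)
  fix \<epsilon> :: real assume "\<epsilon> > 0"
  then obtain \<delta> where "\<delta> > 0" and below: "\<forall>x\<in>A \<delta>. h x < (INF \<delta>\<in>{0<..}. SUP x\<in>A \<delta>. h x) + \<epsilon>"
    using INF_SUP_eventually_less by blast
  then have "W \<delta> \<subseteq> cball 0 ((INF \<delta>\<in>{0<..}. SUP x\<in>A \<delta>. h x) + \<epsilon>)"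
    using W_bound by (fastforce simp: dist_norm)
  then have "closure (W \<delta>) \<subseteq> cball 0 ((INF \<delta>\<in>{0<..}. SUP x\<in>A \<delta>. h x) + \<epsilon>)"
    by (simp add: closure_minimal)
  then show "norm a \<le> (INF \<delta>\<in>{0<..}. SUP x\<in>A \<delta>. h x) + \<epsilon>"
    using a \<open>\<delta> > 0\<close> by (force simp: dist_norm)
qed

end

definition almost_norming :: "('a::real_normed_vector \<Rightarrow> 'b::real_normed_vector) \<Rightarrow> real \<Rightarrow> 'a set" where
  "almost_norming G \<delta> = {x \<in> sphere 0 1. 1 - \<delta> < norm (G x)}"

lemma gnorm_eq_INF_SUP:
  "gnorm G T = (INF \<delta>\<in>{0<..}. SUP x\<in>almost_norming G \<delta>. norm (T x))"
  unfolding gnorm_def almost_norming_def by (simp add: Collect_conj_eq)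

lemma almost_norming_mono: "\<delta> \<le> \<delta>' \<Longrightarrow> almost_norming G \<delta> \<subseteq> almost_norming G \<delta>'"
  by (auto simp: almost_norming_def)

lemma almost_norming_nonempty:
  fixes G :: "'a::real_normed_vector \<Rightarrow>\<^sub>L 'b::real_normed_vector"
  assumes "norm G = 1" "\<delta> > 0"
  shows "almost_norming G \<delta> \<noteq> {}"
proof
  assume empty: "almost_norming G \<delta> = {}"
  have "norm (G x) \<le> max 0 (1 - \<delta>) * norm x" for x
  proof (cases "x = 0")
    case False
    have "inverse (norm x) *\<^sub>R x \<in> sphere 0 1"
      using False by simp
    then have "norm (G (inverse (norm x) *\<^sub>R x)) \<le> 1 - \<delta>"
      using empty by (auto simp: almost_norming_def set_eq_iff not_less)
    then have "norm (G x) \<le> (1 - \<delta>) * norm x"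
      using False by (simp add: blinfun.scaleR_right flip: divide_inverse_commute)
        (simp add: pos_divide_le_eq)
    then show ?thesis
      by (meson max.cobounded2 mult_right_mono norm_ge_zero order_trans)
  qed simp
  then have "norm G \<le> max 0 (1 - \<delta>)"
    by (intro norm_blinfun_bound) auto
  then show False using assms by simp
qed

lemma nontrivial_codomain_if_norm_eq_1:
  fixes G :: "'a::real_normed_vector \<Rightarrow>\<^sub>L 'b::real_normed_vector"
  assumes "norm G = 1"
  shows "\<exists>w::'b. w \<noteq> 0"
proof (rule ccontr)
  assume "\<nexists>w::'b. w \<noteq> 0"
  then have "G = 0" by (auto intro: blinfun_eqI)
  then show False using assms by simp
qed

lemma gnorm_limit_set:
  fixes G T :: "'a::real_normed_vector \<Rightarrow>\<^sub>L 'b::real_normed_vector"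
    and W :: "real \<Rightarrow> 'v::real_normed_algebra_1 set"
  assumes "norm G = 1"
    and W_bound: "\<forall>\<delta>>0. \<forall>w\<in>W \<delta>. \<exists>x\<in>almost_norming G \<delta>. norm w \<le> norm (T x)"
    and W_attained: "\<forall>\<delta>>0. \<forall>x\<in>almost_norming G \<delta>. of_real (norm (T x)) \<in> W \<delta>"
  shows "of_real (gnorm G T) \<in> (\<Inter>\<delta>\<in>{0<..}. closure (W \<delta>))"
    and "\<forall>a\<in>(\<Inter>\<delta>\<in>{0<..}. closure (W \<delta>)). norm a \<le> gnorm G T"
proof -
  have T_bound: "\<bar>norm (T x)\<bar> \<le> norm T" if "x \<in> almost_norming G \<delta>" for x \<delta>
    using that norm_blinfun[of T x] by (simp add: almost_norming_def)
  note A_props = almost_norming_nonempty[OF assms(1)] almost_norming_mono T_bound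
  show "of_real (gnorm G T) \<in> (\<Inter>\<delta>\<in>{0<..}. closure (W \<delta>))"
    unfolding gnorm_eq_INF_SUP
    by (rule INF_SUP_mem_closure[where B="norm T"]) (use A_props W_attained in \<open>auto intro: almost_norming_mono[THEN subsetD]\<close>)
  show "\<forall>a\<in>(\<Inter>\<delta>\<in>{0<..}. closure (W \<delta>)). norm a \<le> gnorm G T"
    unfolding gnorm_eq_INF_SUP
    by (intro ballI norm_le_INF_SUP_if_mem_closure[where B="norm T"])
      (use A_props W_bound in \<open>auto intro: almost_norming_mono[THEN subsetD]\<close>)
qed

lemma is_max_norm_image:
  fixes S :: "'v::real_normed_algebra_1 set"
  assumes "of_real m \<in> S" and "\<forall>a\<in>S. norm a \<le> m"
  shows "is_max (norm ` S) m"
proof -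
  have "norm (of_real m :: 'v) = m"
    using assms by (metis abs_of_nonneg norm_ge_zero norm_of_real order_trans)
  then show ?thesis
    using assms unfolding is_max_def by (metis image_eqI imageE)
qed

lemma is_max_SG_tilde:
  fixes G T :: "'a::real_normed_vector \<Rightarrow>\<^sub>L 'b::real_normed_vector"
  assumes "norm G = 1"
  shows "is_max (SG_tilde G T) (gnorm G T)"
proof -
  define W where "W \<delta> = {norm (T x) | x. x \<in> sphere 0 1 \<and> norm (G x) > 1 - \<delta>}" for \<delta>
  have bound: "\<forall>\<delta>>0. \<forall>w\<in>W \<delta>. \<exists>x\<in>almost_norming G \<delta>. norm w \<le> norm (T x)"
    unfolding W_def almost_norming_def by auto
  have attained: "\<forall>\<delta>>0. \<forall>x\<in>almost_norming G \<delta>. of_real (norm (T x)) \<in> W \<delta>"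
    unfolding W_def almost_norming_def by auto
  have SG: "SG_tilde G T = (\<Inter>\<delta>\<in>{0<..}. closure (W \<delta>))"
    unfolding SG_tilde_def W_def ..
  then show ?thesis
    using gnorm_limit_set[OF assms bound attained] unfolding is_max_def by force
qed

lemma is_max_abs_SG_real:
  fixes G T :: "'a::real_normed_vector \<Rightarrow>\<^sub>L 'b::real_normed_vector"
  assumes "norm G = 1"
  shows "is_max (abs ` SG_real G T) (gnorm G T)"
proof -
  define W where "W \<delta> = {blinfun_apply f (T x) | x f. x \<in> sphere 0 1
    \<and> (f :: 'b \<Rightarrow>\<^sub>L real) \<in> sphere 0 1 \<and> norm (G x) > 1 - \<delta>}" for \<delta>
  have bound: "\<forall>\<delta>>0. \<forall>w\<in>W \<delta>. \<exists>x\<in>almost_norming G \<delta>. norm w \<le> norm (T x)"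
  proof (intro allI impI ballI)
    fix \<delta> :: real and w assume "w \<in> W \<delta>"
    then obtain x and f :: "'b \<Rightarrow>\<^sub>L real" where "w = f (T x)" "norm f = 1" "x \<in> almost_norming G \<delta>"
      unfolding W_def almost_norming_def by auto
    then show "\<exists>x\<in>almost_norming G \<delta>. norm w \<le> norm (T x)"
      using norm_blinfun[of f "T x"] by auto
  qed
  have attained: "\<forall>\<delta>>0. \<forall>x\<in>almost_norming G \<delta>. of_real (norm (T x)) \<in> W \<delta>"
  proof (intro allI impI ballI)
    fix \<delta> :: real and x assume "x \<in> almost_norming G \<delta>"
    obtain f :: "'b \<Rightarrow>\<^sub>L real" where "norm f = 1" "norm (T x) = f (T x)"
      using norming_functional_norm_one[OF nontrivial_codomain_if_norm_eq_1[OF assms]] by metis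
    then show "of_real (norm (T x)) \<in> W \<delta>"
      using \<open>x \<in> almost_norming G \<delta>\<close> unfolding W_def almost_norming_def by auto
  qed
  have SG: "SG_real G T = (\<Inter>\<delta>\<in>{0<..}. closure (W \<delta>))"
    unfolding SG_real_def W_def ..
  have "is_max (norm ` SG_real G T) (gnorm G T)"
    unfolding SG by (rule is_max_norm_image[OF gnorm_limit_set[OF assms bound attained]])
  moreover have "abs = (norm :: real \<Rightarrow> real)" by auto
  ultimately show ?thesis by (simp only:)
qed

lemma is_max_cmod_SG_complex:
  fixes G T :: "'a::complex_banach \<Rightarrow>\<^sub>L 'b::complex_banach"
  assumes "norm G = 1"
  shows "is_max (cmod ` SG_complex G T) (gnorm G T)"
proof -
  define W where "W \<delta> = {f (T x) | x f. x \<in> sphere 0 1 \<and> cdual f \<and> onorm f = 1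
    \<and> norm (G x) > 1 - \<delta>}" for \<delta>
  have bound: "\<forall>\<delta>>0. \<forall>w\<in>W \<delta>. \<exists>x\<in>almost_norming G \<delta>. norm w \<le> norm (T x)"
  proof (intro allI impI ballI)
    fix \<delta> :: real and w assume "w \<in> W \<delta>"
    then obtain x f where "w = f (T x)" "cdual f" "onorm f = 1" "x \<in> almost_norming G \<delta>"
      unfolding W_def almost_norming_def by auto
    then show "\<exists>x\<in>almost_norming G \<delta>. norm w \<le> norm (T x)"
      using onorm[of f "T x"] by (auto simp: cdual_def)
  qed
  have attained: "\<forall>\<delta>>0. \<forall>x\<in>almost_norming G \<delta>. of_real (norm (T x)) \<in> W \<delta>"
  proof (intro allI impI ballI)
    fix \<delta> :: real and x assume "x \<in> almost_norming G \<delta>"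
    obtain f where "cdual f" "onorm f = 1" "of_real (norm (T x)) = f (T x)"
      using norming_cdual_onorm_one[OF nontrivial_codomain_if_norm_eq_1[OF assms]] by metis
    then show "of_real (norm (T x)) \<in> W \<delta>"
      using \<open>x \<in> almost_norming G \<delta>\<close> unfolding W_def almost_norming_def by auto
  qed
  have SG: "SG_complex G T = (\<Inter>\<delta>\<in>{0<..}. closure (W \<delta>))"
    unfolding SG_complex_def W_def ..
  show ?thesis
    unfolding SG by (rule is_max_norm_image[OF gnorm_limit_set[OF assms bound attained]])
qed

theorem proposition2p1:
  shows "(\<forall>(G :: 'a::banach \<Rightarrow>\<^sub>L 'b::banach) (T :: 'a \<Rightarrow>\<^sub>L 'b). norm G = 1 \<longrightarrow>
            is_max (abs ` SG_real (blinfun_apply G) (blinfun_apply T)) (gnorm (blinfun_apply G) (blinfun_apply T))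
          \<and> is_max (SG_tilde (blinfun_apply G) (blinfun_apply T)) (gnorm (blinfun_apply G) (blinfun_apply T)))
       \<and> (\<forall>(G :: 'c::complex_banach \<Rightarrow>\<^sub>L 'd::complex_banach) (T :: 'c \<Rightarrow>\<^sub>L 'd).
            norm G = 1 \<and> clinear_op (blinfun_apply G) \<and> clinear_op (blinfun_apply T) \<longrightarrow>
            is_max (cmod ` SG_complex (blinfun_apply G) (blinfun_apply T)) (gnorm (blinfun_apply G) (blinfun_apply T))
          \<and> is_max (SG_tilde (blinfun_apply G) (blinfun_apply T)) (gnorm (blinfun_apply G) (blinfun_apply T)))"
proof (rule conjI; intro allI impI)
  fix G T :: "'a \<Rightarrow>\<^sub>L 'b"
  assume "norm G = 1"
  then show "is_max (abs ` SG_real G T) (gnorm G T) \<and> is_max (SG_tilde G T) (gnorm G T)"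
    by (simp add: is_max_abs_SG_real is_max_SG_tilde)
next
  fix G T :: "'c \<Rightarrow>\<^sub>L 'd"
  assume "norm G = 1 \<and> clinear_op G \<and> clinear_op T"
  then show "is_max (cmod ` SG_complex G T) (gnorm G T) \<and> is_max (SG_tilde G T) (gnorm G T)"
    by (simp add: is_max_cmod_SG_complex is_max_SG_tilde)
qed

end
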